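(* Consider the following four conditions, each required for all $0\le i,j\le d$: (C1) $E^*_iAE^*_j=0$ if $i-j>1$, and $E^*_iAE^*_j\ne0$ if $i-j=1$; (C2) $E^*_iAE^*_j=0$ if $j-i>1$, and $E^*_iAE^*_j\ne0$ if $j-i=1$; (C3) $E_iA^*E_j=0$ if $i-j>1$, and $E_iA^*E_j\ne0$ if $i-j=1$; (C4) $E_iA^*E_j=0$ if $j-i>1$, and $E_iA^*E_j\ne0$ if $j-i=1$. If at least three of (C1)–(C4) hold, then all four hold; that is, $(A;A^*;\{E_i\}_{i=0}^d;\{E^*_i\}_{i=0}^d)$ is a Leonard system.
   Context: Let $\mathbb K$ be a field, $d\ge 0$ an integer, and $\mathcal A$ a $\mathbb K$-algebra isomorphic to $\mathrm{Mat}_{d+1}(\mathbb K)$, with identity $I$. An element of $\mathcal A$ is multiplicity-free if it has $d+1$ mutually distinct eigenvalues, all in $\mathbb K$; for such $A$ with eigenvalues $\theta_0,\ldots,\theta_d$, the primitive idempotent associated with $\theta_i$ is $E_i=\prod_{j\ne i}(A-\theta_jI)/(\theta_i-\theta_j)$. Standing setup: $A,A^*$ are multiplicity-free elements of $\mathcal A$ ($A^*$ is just a name, not an adjoint); $E_0,\ldots,E_d$ is an ordering of the primitive idempotents of $A$; $E^*_0,\ldots,E^*_d$ is an ordering of the primitive idempotents of $A^*$. The sequence $(A;A^*;\{E_i\};\{E^*_i\})$ is a Leonard system if for all $0\le i,j\le d$: $E^*_iAE^*_j=0$ if $|i-j|>1$, $E^*_iAE^*_j\ne0$ if $|i-j|=1$,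 $E_iA^*E_j=0$ if $|i-j|>1$, and $E_iA^*E_j\ne0$ if $|i-j|=1$. *)

theory Defs
  imports "HOL-Analysis.Analysis"
begin

text \<open>The algebra isomorphic to Mat_{d+1}(K) is modelled by the matrix algebra
  'a^'n^'n over a field 'a, with d + 1 = CARD('n).  The identity is mat 1.\<close>

text \<open>theta enumerates d+1 mutually distinct eigenvalues (in K) of A, indexed 0..d.
  Such an enumeration exists iff A is multiplicity-free.\<close>
definition eigenvalue_enum :: "('a::field)^'n^'n \<Rightarrow> (nat \<Rightarrow> 'a) \<Rightarrow> bool" where
  "eigenvalue_enum A \<theta> \<longleftrightarrow> inj_on \<theta> {..<CARD('n)} \<and>
     (\<forall>i<CARD('n). \<exists>v. v \<noteq> 0 \<and> A *v v = \<theta> i *s v)"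

definition multiplicity_free :: "('a::field)^'n^'n \<Rightarrow> bool" where
  "multiplicity_free A \<longleftrightarrow> (\<exists>\<theta>. eigenvalue_enum A \<theta>)"

definition prim_idem :: "('a::field)^'n^'n \<Rightarrow> (nat \<Rightarrow> 'a) \<Rightarrow> nat \<Rightarrow> 'a^'n^'n" where
  "prim_idem A \<theta> i =
     foldr (\<lambda>j M. (mat (1 / (\<theta> i - \<theta> j)) ** (A - mat (\<theta> j))) ** M)
           (filter (\<lambda>j. j \<noteq> i) [0..<CARD('n)]) (mat 1)"

definition idem_ordering :: "('a::field)^'n^'n \<Rightarrow> (nat \<Rightarrow> 'a^'n^'n) \<Rightarrow> bool" where
  "idem_ordering A E \<longleftrightarrow>
     (\<exists>\<theta>. eigenvalue_enum A \<theta> \<and> (\<forall>i<CARD('n). E i = prim_idem A \<theta> i))"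

definition lower_cond :: "(nat \<Rightarrow> ('a::field)^'n^'n) \<Rightarrow> 'a^'n^'n \<Rightarrow> bool" where
  "lower_cond E M \<longleftrightarrow> (\<forall>i<CARD('n). \<forall>j<CARD('n).
     (i > j + 1 \<longrightarrow> E i ** M ** E j = 0) \<and> (i = j + 1 \<longrightarrow> E i ** M ** E j \<noteq> 0))"

definition upper_cond :: "(nat \<Rightarrow> ('a::field)^'n^'n) \<Rightarrow> 'a^'n^'n \<Rightarrow> bool" where
  "upper_cond E M \<longleftrightarrow> (\<forall>i<CARD('n). \<forall>j<CARD('n).
     (j > i + 1 \<longrightarrow> E i ** M ** E j = 0) \<and> (j = i + 1 \<longrightarrow> E i ** M ** E j \<noteq> 0))"

definition leonard_system ::
  "('a::field)^'n^'n \<Rightarrow> 'a^'n^'n \<Rightarrow> (nat \<Rightarrow> 'a^'n^'n) \<Rightarrow> (nat \<Rightarrow> 'a^'n^'n) \<Rightarrow> bool" where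
  "leonard_system A As E Es \<longleftrightarrow>
     multiplicity_free A \<and> multiplicity_free As \<and> idem_ordering A E \<and> idem_ordering As Es \<and>
     (\<forall>i<CARD('n). \<forall>j<CARD('n).
        (((i > j + 1) \<or> (j > i + 1)) \<longrightarrow> Es i ** A ** Es j = 0) \<and>
        (((i = j + 1) \<or> (j = i + 1)) \<longrightarrow> Es i ** A ** Es j \<noteq> 0) \<and>
        (((i > j + 1) \<or> (j > i + 1)) \<longrightarrow> E i ** As ** E j = 0) \<and>
        (((i = j + 1) \<or> (j = i + 1)) \<longrightarrow> E i ** As ** E j \<noteq> 0))"

end

theory Submission
  imports Defs
begin

(* Assume (C1) and (C2), i.e. A acts irreducibly tridiagonally on the eigenvectors v_0, ..., v_d
   of A*.  In these coordinates A is an irreducible tridiagonal matrix T, so there are nonzero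
   weights m_k with m_k T_kl = m_l T_lk.  The bilinear form B(x, y) = sum_k m_k x_k y_k is then
   nondegenerate, and both A* (diagonal) and A are self-adjoint for it; hence so is every
   polynomial in A, in particular every E_i.  Taking adjoints turns E_i A* E_j into E_j A* E_i,
   so one vanishes iff the other does, and (C3) holds iff (C4) holds.  Exchanging the roles of
   A and A* gives: (C3) and (C4) imply that (C1) holds iff (C2) holds.  If at most one of the
   four conditions fails, one of these two implications applies and forces it to hold. *)

lemma matrix_vector_mul_mat: "(mat c :: 'a::semiring_1^'n^'n) *v x = c *s x"
  by (simp add: vec_eq_iff matrix_vector_mult_def mat_def if_distrib if_distribR
      cong del: if_weak_cong)

lemma foldr_factors_mult_eigenvector:
  fixes A :: "'a::field^'n^'n"
  assumes "A *v w = t *s w"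
  shows "foldr (\<lambda>j M. (mat (c j) ** (A - mat (\<theta> j))) ** M) L (mat 1) *v w
         = (\<Prod>j\<leftarrow>L. c j * (t - \<theta> j)) *s w"
  by (induction L)
     (simp_all add: matrix_vector_mul_assoc[symmetric] matrix_vector_mul_mat
        matrix_vector_mult_diff_rdistrib vec.scale assms algebra_simps)

lemma prim_idem_mult_eigenvector:
  fixes A :: "'a::field^'n^'n"
  assumes "eigenvalue_enum A \<theta>" and i: "i < CARD('n)" and k: "k < CARD('n)"
    and "A *v w = \<theta> k *s w"
  shows "prim_idem A \<theta> i *v w = (if k = i then w else 0)"
proof -
  have inj: "inj_on \<theta> {..<CARD('n)}" using assms(1) unfolding eigenvalue_enum_def by blast
  have "prim_idem A \<theta> i *v w = (\<Prod>j\<in>{..<CARD('n)} - {i}. (\<theta> k - \<theta> j) / (\<theta> i - \<theta> j)) *s w"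
  proof -
    have "set (filter (\<lambda>j. j \<noteq> i) [0..<CARD('n)]) = {..<CARD('n)} - {i}" by auto
    then show ?thesis
      unfolding prim_idem_def foldr_factors_mult_eigenvector[OF assms(4)]
      by (simp flip: prod.distinct_set_conv_list)
  qed
  also have "\<dots> = (if k = i then w else 0)"
  proof (cases "k = i")
    case True
    have "\<theta> i \<noteq> \<theta> j" if "j \<in> {..<CARD('n)} - {i}" for j
      using inj i that unfolding inj_on_def by blast
    then show ?thesis using True by simp
  next
    case False
    then have "(\<Prod>j\<in>{..<CARD('n)} - {i}. (\<theta> k - \<theta> j) / (\<theta> i - \<theta> j)) = 0"
      using k by (intro prod_zero) auto
    then show ?thesis using False by simp
  qed
  finally show ?thesis .
qed

(* HOL-Analysis's bilinear only covers real scalars. *)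
definition bilinear_form :: "('a::field^'n \<Rightarrow> 'a^'n \<Rightarrow> 'a) \<Rightarrow> bool" where
  "bilinear_form B \<longleftrightarrow>
     (\<forall>x y z. B (x + y) z = B x z + B y z \<and> B z (x + y) = B z x + B z y) \<and>
     (\<forall>c x y. B (c *s x) y = c * B x y \<and> B x (c *s y) = c * B x y)"

definition nondegenerate :: "('a::field^'n \<Rightarrow> 'a^'n \<Rightarrow> 'a) \<Rightarrow> bool" where
  "nondegenerate B \<longleftrightarrow> (\<forall>x. (\<forall>y. B x y = 0) \<longrightarrow> x = 0)"

definition self_adjoint :: "('a::field^'n \<Rightarrow> 'a^'n \<Rightarrow> 'a) \<Rightarrow> 'a^'n^'n \<Rightarrow> bool" where
  "self_adjoint B X \<longleftrightarrow> (\<forall>x y. B (X *v x) y = B x (X *v y))"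

context
  fixes B :: "'a::field^'n \<Rightarrow> 'a^'n \<Rightarrow> 'a"
  assumes bilinear: "bilinear_form B"
begin

lemma bilinear_form_add_left [simp]: "B (x + x') y = B x y + B x' y"
  and bilinear_form_add_right [simp]: "B y (x + x') = B y x + B y x'"
  and bilinear_form_scale_left [simp]: "B (c *s x) y = c * B x y"
  and bilinear_form_scale_right [simp]: "B y (c *s x) = c * B y x"
  using bilinear unfolding bilinear_form_def by blast+

lemma bilinear_form_diff_left [simp]: "B (x - x') y = B x y - B x' y"
  and bilinear_form_diff_right [simp]: "B y (x - x') = B y x - B y x'"
  by (metis bilinear_form_add_left bilinear_form_add_right diff_add_cancel eq_diff_eq)+

lemma bilinear_form_zero_right [simp]: "B x 0 = 0"
  using bilinear_form_scale_right[of x 0 0] by simp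

lemma self_adjoint_mat: "self_adjoint B (mat c)"
  by (simp add: self_adjoint_def matrix_vector_mul_mat)

lemma self_adjoint_diff:
  "self_adjoint B X \<Longrightarrow> self_adjoint B Y \<Longrightarrow> self_adjoint B (X - Y)"
  by (simp add: self_adjoint_def matrix_vector_mult_diff_rdistrib)

lemma self_adjoint_mult_commute:
  assumes "self_adjoint B X" "self_adjoint B Y" "X ** Y = Y ** X"
  shows "self_adjoint B (X ** Y)"
  unfolding self_adjoint_def
proof (intro allI)
  fix x y
  have "B ((X ** Y) *v x) y = B x ((Y ** X) *v y)"
    using assms(1,2) by (simp add: self_adjoint_def matrix_vector_mul_assoc[symmetric])
  then show "B ((X ** Y) *v x) y = B x ((X ** Y) *v y)" by (simp add: assms(3))
qed

lemma self_adjoint_prim_idem: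
  fixes A :: "'a^'n^'n"
  assumes "self_adjoint B A"
  shows "self_adjoint B (prim_idem A \<theta> i)"
proof -
  define factor where "factor j = mat (1 / (\<theta> i - \<theta> j)) ** (A - mat (\<theta> j))" for j
  have factor_self_adjoint: "self_adjoint B (factor j)" for j
    unfolding factor_def
    by (intro self_adjoint_mult_commute self_adjoint_diff self_adjoint_mat assms)
       (simp add: matrix_eq matrix_vector_mul_assoc[symmetric] matrix_vector_mul_mat
          matrix_vector_mult_diff_rdistrib vec.scale)
  have factor_commute: "factor j ** F = F ** factor j" if "A ** F = F ** A" for j F
  proof -
    have "F *v (A *v x) = A *v (F *v x)" for x
      using that by (simp add: matrix_vector_mul_assoc)
    then show ?thesis
      unfolding factor_def matrix_eq
      by (simp add: matrix_vector_mul_assoc[symmetric] matrix_vector_mul_mat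
          matrix_vector_mult_diff_rdistrib matrix_vector_mult_diff_distrib vector_scalar_commute)
  qed
  have "self_adjoint B (foldr (\<lambda>j F. factor j ** F) L (mat 1)) \<and>
        A ** foldr (\<lambda>j F. factor j ** F) L (mat 1) = foldr (\<lambda>j F. factor j ** F) L (mat 1) ** A"
    for L
  proof (induction L)
    case (Cons j L)
    define F where "F = foldr (\<lambda>j F. factor j ** F) L (mat 1)"
    have "A ** (factor j ** F) = (factor j ** A) ** F"
      using factor_commute[of A j] by (simp add: matrix_mul_assoc)
    also have "\<dots> = (factor j ** F) ** A"
      using Cons unfolding F_def by (metis matrix_mul_assoc)
    finally show ?case
      using Cons factor_commute unfolding F_def
      by (auto intro!: self_adjoint_mult_commute factor_self_adjoint)
  qed (simp add: self_adjoint_mat)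
  then show ?thesis unfolding prim_idem_def factor_def by blast
qed

lemma sandwich_eq_0_swap:
  assumes "nondegenerate B" "self_adjoint B P" "self_adjoint B Q" "self_adjoint B X"
    and "Q ** X ** P = 0"
  shows "P ** X ** Q = 0"
  unfolding matrix_eq
proof
  fix x
  have "B ((P ** X ** Q) *v x) y = 0" for y
  proof -
    have "B ((P ** X ** Q) *v x) y = B x ((Q ** X ** P) *v y)"
      using assms(2-4) by (simp add: self_adjoint_def matrix_vector_mul_assoc[symmetric])
    then show ?thesis using assms(5) by simp
  qed
  then show "(P ** X ** Q) *v x = 0 *v x" using assms(1) unfolding nondegenerate_def by simp
qed

end

lemma tridiagonal_symmetrizable:
  fixes T :: "nat \<Rightarrow> nat \<Rightarrow> 'a::field"
  assumes outside: "\<And>k l. l + 1 < k \<Longrightarrow> k < n \<Longrightarrow> T k l = 0 \<and> T l k = 0"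
    and upper: "\<And>k. Suc k < n \<Longrightarrow> T k (Suc k) \<noteq> 0"
    and lower: "\<And>k. Suc k < n \<Longrightarrow> T (Suc k) k \<noteq> 0"
  obtains m where "\<And>k. k < n \<Longrightarrow> m k \<noteq> 0"
    and "\<And>k l. k < n \<Longrightarrow> l < n \<Longrightarrow> m k * T k l = m l * T l k"
proof
  define m where "m k = (\<Prod>i<k. T i (Suc i) / T (Suc i) i)" for k
  have m_Suc: "m (Suc k) * T (Suc k) k = m k * T k (Suc k)" if "Suc k < n" for k
    using lower[OF that] by (simp add: m_def)
  show "m k \<noteq> 0" if "k < n" for k
    using that upper lower by (simp add: m_def prod_zero_iff)
  show "m k * T k l = m l * T l k" if "k < n" "l < n" for k l
  proof -
    consider "l + 1 < k" | "k + 1 < l" | "k = l" | "l = Suc k" | "k = Suc l" by linarith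
    then show ?thesis
    proof cases
      case 1
      then show ?thesis using outside that by simp
    next
      case 2
      then have "T k l = 0" "T l k = 0" using outside[where k = l and l = k] that by auto
      then show ?thesis by simp
    next
      case 4
      then show ?thesis using m_Suc[of k] that by simp
    next
      case 5
      then show ?thesis using m_Suc[of l] that by simp
    qed simp
  qed
qed

locale eigenbasis =
  fixes M :: "'a::field^'n^'n" and \<theta> :: "nat \<Rightarrow> 'a" and E :: "nat \<Rightarrow> 'a^'n^'n"
    and u :: "nat \<Rightarrow> 'a^'n"
  assumes eigenvalue_enum: "eigenvalue_enum M \<theta>"
    and idem: "\<And>i. i < CARD('n) \<Longrightarrow> E i = prim_idem M \<theta> i"
    and eigenvector_nonzero: "\<And>i. i < CARD('n) \<Longrightarrow> u i \<noteq> 0"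
    and eigenvector: "\<And>i. i < CARD('n) \<Longrightarrow> M *v u i = \<theta> i *s u i"
begin

abbreviation "eigenvectors \<equiv> u ` {..<CARD('n)}"

lemma idem_mult_eigenvector:
  "i < CARD('n) \<Longrightarrow> k < CARD('n) \<Longrightarrow> E i *v u k = (if k = i then u k else 0)"
  using prim_idem_mult_eigenvector[OF eigenvalue_enum _ _ eigenvector] idem by simp

lemma inj_on_eigenvector: "inj_on u {..<CARD('n)}"
proof (rule inj_onI)
  fix i k assume i: "i \<in> {..<CARD('n)}" and k: "k \<in> {..<CARD('n)}" and eq: "u i = u k"
  show "i = k"
  proof (rule ccontr)
    assume "i \<noteq> k"
    then have "E i *v u k = 0" using idem_mult_eigenvector i k by simp
    then show False using idem_mult_eigenvector[of i i] eigenvector_nonzero i eq by simp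
  qed
qed

lemma independent_eigenvectors: "vec.independent eigenvectors"
proof (rule vec.independent_if_scalars_zero)
  fix f x assume sum: "(\<Sum>x\<in>eigenvectors. f x *s x) = 0" and "x \<in> eigenvectors"
  then obtain i where i: "i < CARD('n)" and x: "x = u i" by auto
  have "0 = E i *v (\<Sum>x\<in>eigenvectors. f x *s x)" using sum by simp
  also have "\<dots> = (\<Sum>k<CARD('n). f (u k) *s (E i *v u k))"
    by (simp add: vec.linear_sum vec.linear_scale sum.reindex[OF inj_on_eigenvector])
  also have "\<dots> = f (u i) *s u i"
    using i by (simp add: idem_mult_eigenvector if_distrib cong: if_cong)
  finally show "f x = 0" using eigenvector_nonzero[OF i] x by simp
qed simp

lemma span_eigenvectors: "vec.span eigenvectors = UNIV"
proof -
  have "card eigenvectors = vec.dim (UNIV :: ('a^'n) set)"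
    using inj_on_eigenvector by (simp add: card_image card_cart_basis)
  then show ?thesis
    using independent_eigenvectors vec.card_eq_dim[of eigenvectors UNIV] by auto
qed

definition coord :: "nat \<Rightarrow> 'a^'n \<Rightarrow> 'a" where
  "coord k x = vec.representation eigenvectors x (u k)"

lemma coord_add: "coord k (x + y) = coord k x + coord k y"
  and coord_scale: "coord k (c *s x) = c * coord k x"
  by (simp_all add: coord_def span_eigenvectors independent_eigenvectors
      vec.representation_add vec.representation_scale)

lemma coord_sum: "coord k (\<Sum>j\<in>J. f j) = (\<Sum>j\<in>J. coord k (f j))"
  by (simp add: coord_def span_eigenvectors independent_eigenvectors vec.representation_sum)

lemma coord_eigenvector:
  "k < CARD('n) \<Longrightarrow> j < CARD('n) \<Longrightarrow> coord k (u j) = (if j = k then 1 else 0)"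
  using inj_on_eigenvector
  by (simp add: coord_def vec.representation_basis independent_eigenvectors inj_on_eq_iff)

lemma eigenvector_expansion: "x = (\<Sum>k<CARD('n). coord k x *s u k)"
  using vec.sum_representation_eq[of eigenvectors x eigenvectors]
    independent_eigenvectors span_eigenvectors
  by (simp add: coord_def sum.reindex[OF inj_on_eigenvector])

lemma idem_mult_eq_coord: "k < CARD('n) \<Longrightarrow> E k *v x = coord k x *s u k"
  by (subst eigenvector_expansion[of x])
     (simp add: vec.linear_sum vector_scalar_commute idem_mult_eigenvector if_distrib cong: if_cong)

lemma coord_matrix_mult: "coord k (X *v x) = (\<Sum>l<CARD('n). coord k (X *v u l) * coord l x)"
  by (subst eigenvector_expansion[of x])
     (simp add: vec.linear_sum vector_scalar_commute coord_sum coord_scale mult.commute)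

lemma sandwich_eq_0_iff:
  assumes i: "i < CARD('n)" and j: "j < CARD('n)"
  shows "E i ** X ** E j = 0 \<longleftrightarrow> coord i (X *v u j) = 0"
proof
  assume "E i ** X ** E j = 0"
  then have "(E i ** X ** E j) *v u j = 0" by simp
  then show "coord i (X *v u j) = 0"
    using eigenvector_nonzero[OF i]
    by (simp add: matrix_vector_mul_assoc[symmetric] idem_mult_eq_coord i j coord_eigenvector)
next
  assume "coord i (X *v u j) = 0"
  then show "E i ** X ** E j = 0"
    by (simp add: matrix_eq matrix_vector_mul_assoc[symmetric] idem_mult_eq_coord i j
        vector_scalar_commute coord_scale)
qed

definition coord_form :: "(nat \<Rightarrow> 'a) \<Rightarrow> 'a^'n \<Rightarrow> 'a^'n \<Rightarrow> 'a" where
  "coord_form m x y = (\<Sum>k<CARD('n). m k * coord k x * coord k y)"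

lemma bilinear_form_coord_form: "bilinear_form (coord_form m)"
  by (simp add: bilinear_form_def coord_form_def coord_add coord_scale sum.distrib
      sum_distrib_left algebra_simps)

lemma nondegenerate_coord_form:
  assumes "\<And>k. k < CARD('n) \<Longrightarrow> m k \<noteq> 0"
  shows "nondegenerate (coord_form m)"
  unfolding nondegenerate_def
proof (intro allI impI)
  fix x assume zero: "\<forall>y. coord_form m x y = 0"
  have "coord j x = 0" if j: "j < CARD('n)" for j
  proof -
    have "coord_form m x (u j) = m j * coord j x"
      using j by (simp add: coord_form_def coord_eigenvector if_distrib cong: if_cong)
    then show ?thesis using zero assms j by simp
  qed
  then show "x = 0" by (subst eigenvector_expansion) simp
qed

lemma self_adjoint_coord_form:
  assumes symm: "\<And>k l. k < CARD('n) \<Longrightarrow> l < CARD('n) \<Longrightarrow>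
                   m k * coord k (X *v u l) = m l * coord l (X *v u k)"
  shows "self_adjoint (coord_form m) X"
  unfolding self_adjoint_def
proof (intro allI)
  fix x y
  have "coord_form m (X *v x) y =
      (\<Sum>k<CARD('n). \<Sum>l<CARD('n). m k * coord k (X *v u l) * coord l x * coord k y)"
    by (simp add: coord_form_def coord_matrix_mult[of _ X x] sum_distrib_left sum_distrib_right
        mult.assoc)
  also have "\<dots> = (\<Sum>k<CARD('n). \<Sum>l<CARD('n). m l * coord l (X *v u k) * coord l x * coord k y)"
    by (intro sum.cong refl) (simp add: symm)
  also have "\<dots> = coord_form m x (X *v y)"
    by (subst sum.swap)
       (simp add: coord_form_def coord_matrix_mult[of _ X y] sum_distrib_left mult_ac)
  finally show "coord_form m (X *v x) y = coord_form m x (X *v y)" .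
qed

lemma exists_form_self_adjoint:
  assumes "lower_cond E X" and "upper_cond E X"
  obtains B where "bilinear_form B" "nondegenerate B" "self_adjoint B M" "self_adjoint B X"
proof -
  define T where "T k l = coord k (X *v u l)" for k l
  have outside: "T k l = 0 \<and> T l k = 0" if "l + 1 < k" "k < CARD('n)" for k l
  proof -
    have "E k ** X ** E l = 0" "E l ** X ** E k = 0"
      using assms that unfolding lower_cond_def upper_cond_def by simp_all
    then show ?thesis using that sandwich_eq_0_iff unfolding T_def by simp
  qed
  have upper: "T k (Suc k) \<noteq> 0" and lower: "T (Suc k) k \<noteq> 0" if "Suc k < CARD('n)" for k
  proof -
    have "E k ** X ** E (Suc k) \<noteq> 0" "E (Suc k) ** X ** E k \<noteq> 0"
      using assms that unfolding lower_cond_def upper_cond_def by simp_all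
    then show "T k (Suc k) \<noteq> 0" "T (Suc k) k \<noteq> 0"
      using that sandwich_eq_0_iff unfolding T_def by simp_all
  qed
  obtain m where nonzero: "\<And>k. k < CARD('n) \<Longrightarrow> m k \<noteq> 0"
    and symm: "\<And>k l. k < CARD('n) \<Longrightarrow> l < CARD('n) \<Longrightarrow> m k * T k l = m l * T l k"
    using tridiagonal_symmetrizable[where T = T, OF outside upper lower] by blast
  have M_self_adjoint: "self_adjoint (coord_form m) M"
    by (rule self_adjoint_coord_form) (simp add: eigenvector coord_scale coord_eigenvector)
  have X_self_adjoint: "self_adjoint (coord_form m) X"
    using symm unfolding T_def by (rule self_adjoint_coord_form)
  show ?thesis
    using bilinear_form_coord_form nondegenerate_coord_form[OF nonzero] M_self_adjoint X_self_adjoint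
    by (rule that)
qed

end

lemma idem_ordering_obtains_eigenbasis:
  fixes M :: "'a::field^'n^'n"
  assumes "idem_ordering M E"
  obtains \<theta> u where "eigenbasis M \<theta> E u"
proof -
  obtain \<theta> where enum: "eigenvalue_enum M \<theta>" and E: "\<forall>i<CARD('n). E i = prim_idem M \<theta> i"
    using assms unfolding idem_ordering_def by blast
  obtain u where "\<And>i. i < CARD('n) \<Longrightarrow> u i \<noteq> 0 \<and> M *v u i = \<theta> i *s u i"
    using enum unfolding eigenvalue_enum_def by metis
  then have "eigenbasis M \<theta> E u"
    using enum E by unfold_locales auto
  then show ?thesis by (rule that)
qed

lemma lower_cond_iff_upper_cond_if_sandwich_sym:
  fixes E :: "nat \<Rightarrow> 'a::field^'n^'n"
  assumes "\<And>i j. i < CARD('n) \<Longrightarrow> j < CARD('n) \<Longrightarrow>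
             E i ** X ** E j = 0 \<Longrightarrow> E j ** X ** E i = 0"
  shows "lower_cond E X \<longleftrightarrow> upper_cond E X"
  using assms unfolding lower_cond_def upper_cond_def by blast

lemma lower_cond_iff_upper_cond:
  fixes A As :: "'a::field^'n^'n"
  assumes "idem_ordering A E" and "idem_ordering As Es"
    and "lower_cond Es A" and "upper_cond Es A"
  shows "lower_cond E As \<longleftrightarrow> upper_cond E As"
proof -
  obtain \<theta>s v where "eigenbasis As \<theta>s Es v"
    using assms(2) by (rule idem_ordering_obtains_eigenbasis)
  then obtain B where B: "bilinear_form B" "nondegenerate B" "self_adjoint B As" "self_adjoint B A"
    using assms(3,4) by (rule eigenbasis.exists_form_self_adjoint)
  obtain \<theta> where E: "\<forall>i<CARD('n). E i = prim_idem A \<theta> i"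
    using assms(1) unfolding idem_ordering_def by blast
  have E_self_adjoint: "self_adjoint B (E i)" if "i < CARD('n)" for i
    using E that self_adjoint_prim_idem[OF B(1,4)] by simp
  show ?thesis
  proof (rule lower_cond_iff_upper_cond_if_sandwich_sym)
    fix i j assume "i < CARD('n)" "j < CARD('n)" "E i ** As ** E j = 0"
    then show "E j ** As ** E i = 0"
      using sandwich_eq_0_swap[OF B(1,2) E_self_adjoint[of j] E_self_adjoint[of i] B(3)] by simp
  qed
qed

lemma card_filter_large_imp_disj:
  assumes "finite S" and "card S < card {k \<in> S. P k} + 2"
    and "i \<in> S" and "j \<in> S" and "i \<noteq> j"
  shows "P i \<or> P j"
proof (rule ccontr)
  assume "\<not> (P i \<or> P j)"
  then have "{k \<in> S. P k} \<subseteq> S - {i, j}" by auto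
  then have "card {k \<in> S. P k} \<le> card (S - {i, j})"
    using assms(1) by (intro card_mono) auto
  also have "\<dots> + 2 = card S"
    using assms(1,3-5) card_mono[of S "{i, j}"] by (simp add: card_Diff_subset)
  finally show False using assms(2) by linarith
qed

lemma leonard_system_iff:
  "leonard_system A As E Es \<longleftrightarrow>
     multiplicity_free A \<and> multiplicity_free As \<and> idem_ordering A E \<and> idem_ordering As Es \<and>
     lower_cond Es A \<and> upper_cond Es A \<and> lower_cond E As \<and> upper_cond E As"
  unfolding leonard_system_def lower_cond_def upper_cond_def by fast

theorem lemma5p7:
  fixes A As :: "('a::field)^'n^'n"
    and E Es :: "nat \<Rightarrow> 'a^'n^'n"
  assumes "multiplicity_free A" and "multiplicity_free As"
    and "idem_ordering A E" and "idem_ordering As Es"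
    and "card {k \<in> {1::nat..4}.
            (k = 1 \<and> lower_cond Es A) \<or> (k = 2 \<and> upper_cond Es A) \<or>
            (k = 3 \<and> lower_cond E As) \<or> (k = 4 \<and> upper_cond E As)} \<ge> 3"
  shows "lower_cond Es A \<and> upper_cond Es A \<and> lower_cond E As \<and> upper_cond E As
         \<and> leonard_system A As E Es"
proof -
  define C where "C k \<longleftrightarrow> (k = 1 \<and> lower_cond Es A) \<or> (k = 2 \<and> upper_cond Es A) \<or>
            (k = 3 \<and> lower_cond E As) \<or> (k = 4 \<and> upper_cond E As)" for k :: nat
  have disj: "C i \<or> C j" if "i \<in> {1..4}" "j \<in> {1..4}" "i \<noteq> j" for i j
    using card_filter_large_imp_disj[of "{1..4}" C] assms(5) that unfolding C_def by simp
  have "lower_cond Es A \<or> upper_cond Es A" "lower_cond E As \<or> upper_cond E As"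
    "lower_cond Es A \<or> lower_cond E As" "lower_cond Es A \<or> upper_cond E As"
    "upper_cond Es A \<or> lower_cond E As" "upper_cond Es A \<or> upper_cond E As"
    using disj[of 1 2] disj[of 3 4] disj[of 1 3] disj[of 1 4] disj[of 2 3] disj[of 2 4]
    by (simp_all add: C_def)
  moreover note lower_cond_iff_upper_cond[OF assms(3,4)] lower_cond_iff_upper_cond[OF assms(4,3)]
  ultimately show ?thesis using assms(1-4) leonard_system_iff by blast
qed

end
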